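(* Let $\Lambda$ be an artin algebra and let $f: X\to Y$ and $f': X'\to Y$ be epimorphisms of $\Lambda$-modules with $f=f'h$ for some $h: X\to X'$. Let $K=\operatorname{Ker} f$, $K'=\operatorname{Ker} f'$ and let $h': K\to K'$ be the restriction of $h$, so that there is a commutative diagram with exact rows $0\to K\to X\to Y\to 0$ and $0\to K'\to X'\to Y\to 0$ with vertical maps $h', h, 1_Y$. If $f$ is right minimal and $h'$ is a split epimorphism, then $f'$ is right minimal.
   Context: Modules are finite length left $\Lambda$-modules. A map $g: X\to Y$ is right minimal if there is no nonzero direct summand $X''$ of $X$ with $g(X'')=0$. *)

theory Defs
  imports "HOL-Algebra.Algebra"
begin

text \<open>Left modules over a (not necessarily commutative) ring L.
  The record type of HOL-Algebra modules is reused; only the additive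
  structure and the scalar multiplication of M are relevant.\<close>

definition lmodule :: "('a, 'z) ring_scheme \<Rightarrow> ('a, 'b) module \<Rightarrow> bool" where
  "lmodule L M \<longleftrightarrow> ring L \<and> abelian_group M \<and>
     (\<forall>a\<in>carrier L. \<forall>x\<in>carrier M. a \<odot>\<^bsub>M\<^esub> x \<in> carrier M) \<and>
     (\<forall>a\<in>carrier L. \<forall>b\<in>carrier L. \<forall>x\<in>carrier M.
        (a \<oplus>\<^bsub>L\<^esub> b) \<odot>\<^bsub>M\<^esub> x = a \<odot>\<^bsub>M\<^esub> x \<oplus>\<^bsub>M\<^esub> b \<odot>\<^bsub>M\<^esub> x) \<and>
     (\<forall>a\<in>carrier L. \<forall>x\<in>carrier M. \<forall>y\<in>carrier M.
        a \<odot>\<^bsub>M\<^esub> (x \<oplus>\<^bsub>M\<^esub> y) = a \<odot>\<^bsub>M\<^esub> x \<oplus>\<^bsub>M\<^esub> a \<odot>\<^bsub>M\<^esub> y) \<and>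
     (\<forall>a\<in>carrier L. \<forall>b\<in>carrier L. \<forall>x\<in>carrier M.
        (a \<otimes>\<^bsub>L\<^esub> b) \<odot>\<^bsub>M\<^esub> x = a \<odot>\<^bsub>M\<^esub> (b \<odot>\<^bsub>M\<^esub> x)) \<and>
     (\<forall>x\<in>carrier M. \<one>\<^bsub>L\<^esub> \<odot>\<^bsub>M\<^esub> x = x)"

definition lsubmodule :: "('a, 'z) ring_scheme \<Rightarrow> ('a, 'b) module \<Rightarrow> 'b set \<Rightarrow> bool" where
  "lsubmodule L M N \<longleftrightarrow> N \<subseteq> carrier M \<and> \<zero>\<^bsub>M\<^esub> \<in> N \<and>
     (\<forall>x\<in>N. \<forall>y\<in>N. x \<oplus>\<^bsub>M\<^esub> y \<in> N) \<and>
     (\<forall>x\<in>N. \<ominus>\<^bsub>M\<^esub> x \<in> N) \<and>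
     (\<forall>a\<in>carrier L. \<forall>x\<in>N. a \<odot>\<^bsub>M\<^esub> x \<in> N)"

definition submod :: "('a, 'b) module \<Rightarrow> 'b set \<Rightarrow> ('a, 'b) module" where
  "submod M N = M\<lparr>carrier := N\<rparr>"

definition finite_length :: "('a, 'z) ring_scheme \<Rightarrow> ('a, 'b) module \<Rightarrow> bool" where
  "finite_length L M \<longleftrightarrow> (\<exists>n::nat. \<forall>k::nat. \<forall>C :: nat \<Rightarrow> 'b set.
      (\<forall>i\<le>k. lsubmodule L M (C i)) \<and> (\<forall>i<k. C i \<subset> C (Suc i)) \<longrightarrow> k \<le> n)"

definition lin_map :: "('a, 'z) ring_scheme \<Rightarrow> ('a, 'b) module \<Rightarrow> ('a, 'c) module \<Rightarrow> ('b \<Rightarrow> 'c) \<Rightarrow> bool" where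
  "lin_map L M N f \<longleftrightarrow> f \<in> carrier M \<rightarrow> carrier N \<and>
     (\<forall>x\<in>carrier M. \<forall>y\<in>carrier M. f (x \<oplus>\<^bsub>M\<^esub> y) = f x \<oplus>\<^bsub>N\<^esub> f y) \<and>
     (\<forall>a\<in>carrier L. \<forall>x\<in>carrier M. f (a \<odot>\<^bsub>M\<^esub> x) = a \<odot>\<^bsub>N\<^esub> f x)"

definition epi :: "('a, 'z) ring_scheme \<Rightarrow> ('a, 'b) module \<Rightarrow> ('a, 'c) module \<Rightarrow> ('b \<Rightarrow> 'c) \<Rightarrow> bool" where
  "epi L M N f \<longleftrightarrow> lin_map L M N f \<and> f ` carrier M = carrier N"

definition split_epi :: "('a, 'z) ring_scheme \<Rightarrow> ('a, 'b) module \<Rightarrow> ('a, 'c) module \<Rightarrow> ('b \<Rightarrow> 'c) \<Rightarrow> bool" where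
  "split_epi L M N f \<longleftrightarrow> lin_map L M N f \<and>
     (\<exists>s. lin_map L N M s \<and> (\<forall>y\<in>carrier N. f (s y) = y))"

definition kernel_of :: "('a, 'b) module \<Rightarrow> ('a, 'c) module \<Rightarrow> ('b \<Rightarrow> 'c) \<Rightarrow> 'b set" where
  "kernel_of M N f = {x \<in> carrier M. f x = \<zero>\<^bsub>N\<^esub>}"

definition direct_summand :: "('a, 'z) ring_scheme \<Rightarrow> ('a, 'b) module \<Rightarrow> 'b set \<Rightarrow> bool" where
  "direct_summand L M N \<longleftrightarrow> lsubmodule L M N \<and>
     (\<exists>N'. lsubmodule L M N' \<and> N \<inter> N' = {\<zero>\<^bsub>M\<^esub>} \<and>
        (\<forall>x\<in>carrier M. \<exists>a\<in>N. \<exists>b\<in>N'. x = a \<oplus>\<^bsub>M\<^esub> b))"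

definition right_minimal :: "('a, 'z) ring_scheme \<Rightarrow> ('a, 'b) module \<Rightarrow> ('a, 'c) module \<Rightarrow> ('b \<Rightarrow> 'c) \<Rightarrow> bool" where
  "right_minimal L M Y g \<longleftrightarrow>
     \<not> (\<exists>N. direct_summand L M N \<and> N \<noteq> {\<zero>\<^bsub>M\<^esub>} \<and> (\<forall>x\<in>N. g x = \<zero>\<^bsub>Y\<^esub>))"

definition artinian_cring :: "'e ring \<Rightarrow> bool" where
  "artinian_cring S \<longleftrightarrow> cring S \<and>
     \<not> (\<exists>I :: nat \<Rightarrow> 'e set. \<forall>n. ideal (I n) S \<and> I (Suc n) \<subset> I n)"

definition artin_algebra_over :: "'e ring \<Rightarrow> ('e \<Rightarrow> 'a) \<Rightarrow> 'a ring \<Rightarrow> bool" where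
  "artin_algebra_over S phi L \<longleftrightarrow> artinian_cring S \<and> ring L \<and>
     phi \<in> ring_hom S L \<and>
     (\<forall>s\<in>carrier S. \<forall>x\<in>carrier L. phi s \<otimes>\<^bsub>L\<^esub> x = x \<otimes>\<^bsub>L\<^esub> phi s) \<and>
     (\<exists>G. finite G \<and> G \<subseteq> carrier L \<and>
        (\<forall>x\<in>carrier L. \<exists>c \<in> G \<rightarrow> carrier S.
            x = (\<Oplus>\<^bsub>L\<^esub> g\<in>G. phi (c g) \<otimes>\<^bsub>L\<^esub> g)))"

end

theory Submission
  imports Defs
begin

text \<open>Suppose a nonzero direct summand N' of X' is killed by f'. Then N' lies in K', and
  the splitting s of h' carries it onto a submodule s(N') of K on which h is a bijection
  back onto N'. Pulling a complement of N' back along h gives a complement of s(N') in X,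
  so s(N') is a nonzero direct summand of X killed by f, contradicting the right
  minimality of f.\<close>

lemma lmodule_abelian_group: "lmodule L M \<Longrightarrow> abelian_group M"
  by (simp add: lmodule_def)

lemma lmodule_smult_closed:
  "lmodule L M \<Longrightarrow> a \<in> carrier L \<Longrightarrow> x \<in> carrier M \<Longrightarrow> a \<odot>\<^bsub>M\<^esub> x \<in> carrier M"
  by (simp add: lmodule_def)

lemma lmodule_smult_zero:
  assumes "lmodule L M" and "a \<in> carrier L"
  shows "a \<odot>\<^bsub>M\<^esub> \<zero>\<^bsub>M\<^esub> = \<zero>\<^bsub>M\<^esub>"
proof -
  interpret M: abelian_group M using assms(1) by (rule lmodule_abelian_group)
  have closed: "a \<odot>\<^bsub>M\<^esub> \<zero>\<^bsub>M\<^esub> \<in> carrier M"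
    using assms by (simp add: lmodule_smult_closed)
  have "a \<odot>\<^bsub>M\<^esub> (x \<oplus>\<^bsub>M\<^esub> y) = a \<odot>\<^bsub>M\<^esub> x \<oplus>\<^bsub>M\<^esub> a \<odot>\<^bsub>M\<^esub> y"
    if "x \<in> carrier M" "y \<in> carrier M" for x y
    using assms that by (simp add: lmodule_def)
  from this[of "\<zero>\<^bsub>M\<^esub>" "\<zero>\<^bsub>M\<^esub>"]
  have "a \<odot>\<^bsub>M\<^esub> \<zero>\<^bsub>M\<^esub> \<oplus>\<^bsub>M\<^esub> a \<odot>\<^bsub>M\<^esub> \<zero>\<^bsub>M\<^esub> = a \<odot>\<^bsub>M\<^esub> \<zero>\<^bsub>M\<^esub> \<oplus>\<^bsub>M\<^esub> \<zero>\<^bsub>M\<^esub>"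
    using closed by simp
  then show ?thesis
    using closed by (simp add: M.add.l_cancel)
qed

lemma lin_map_zero:
  assumes "abelian_group M" and "abelian_group N" and "lin_map L M N f"
  shows "f \<zero>\<^bsub>M\<^esub> = \<zero>\<^bsub>N\<^esub>"
proof -
  interpret M: abelian_group M by fact
  interpret N: abelian_group N by fact
  have closed: "f \<zero>\<^bsub>M\<^esub> \<in> carrier N"
    using assms(3) by (auto simp: lin_map_def)
  have "f (\<zero>\<^bsub>M\<^esub> \<oplus>\<^bsub>M\<^esub> \<zero>\<^bsub>M\<^esub>) = f \<zero>\<^bsub>M\<^esub> \<oplus>\<^bsub>N\<^esub> f \<zero>\<^bsub>M\<^esub>"
    using assms(3) unfolding lin_map_def by blast
  then have "f \<zero>\<^bsub>M\<^esub> \<oplus>\<^bsub>N\<^esub> f \<zero>\<^bsub>M\<^esub> = f \<zero>\<^bsub>M\<^esub> \<oplus>\<^bsub>N\<^esub> \<zero>\<^bsub>N\<^esub>"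
    using closed by simp
  then show ?thesis
    using closed by (simp add: N.add.l_cancel)
qed

lemma lin_map_neg:
  assumes "abelian_group M" and "abelian_group N" and "lin_map L M N f"
    and x: "x \<in> carrier M"
  shows "f (\<ominus>\<^bsub>M\<^esub> x) = \<ominus>\<^bsub>N\<^esub> f x"
proof -
  interpret M: abelian_group M by fact
  interpret N: abelian_group N by fact
  have f: "f \<in> carrier M \<rightarrow> carrier N" using assms(3) by (simp add: lin_map_def)
  have "f (\<ominus>\<^bsub>M\<^esub> x) \<oplus>\<^bsub>N\<^esub> f x = f (\<ominus>\<^bsub>M\<^esub> x \<oplus>\<^bsub>M\<^esub> x)"
    using assms(3) x by (simp add: lin_map_def)
  also have "\<dots> = \<zero>\<^bsub>N\<^esub>"
    using lin_map_zero[OF assms(1-3)] x by (simp add: M.l_neg)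
  finally show ?thesis
    using f x by (auto intro: N.minus_equality[symmetric])
qed

lemma lsubmodule_zero:
  assumes "lmodule L M"
  shows "lsubmodule L M {\<zero>\<^bsub>M\<^esub>}"
proof -
  interpret M: abelian_group M using assms by (rule lmodule_abelian_group)
  show ?thesis
    using lmodule_smult_zero[OF assms] by (simp add: lsubmodule_def)
qed

lemma lsubmodule_vimage:
  assumes M: "lmodule L M" and N: "lmodule L N" and f: "lin_map L M N f"
    and B: "lsubmodule L N B"
  shows "lsubmodule L M {x \<in> carrier M. f x \<in> B}"
proof -
  interpret M: abelian_group M using M by (rule lmodule_abelian_group)
  have MN: "abelian_group M" "abelian_group N"
    using M N by (simp_all add: lmodule_abelian_group)
  show ?thesis
    using lin_map_zero[OF MN f] lin_map_neg[OF MN f] f B lmodule_smult_closed[OF M]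
    by (auto simp: lsubmodule_def lin_map_def)
qed

lemma kernel_of_lsubmodule:
  assumes "lmodule L M" and "lmodule L N" and "lin_map L M N f"
  shows "lsubmodule L M (kernel_of M N f)"
  using lsubmodule_vimage[OF assms lsubmodule_zero[OF assms(2)]]
  by (simp add: kernel_of_def)

lemma lsubmodule_image:
  assumes M: "lmodule L M" and N: "lmodule L N" and f: "lin_map L M N f"
    and A: "lsubmodule L M A"
  shows "lsubmodule L N (f ` A)"
proof -
  have MN: "abelian_group M" "abelian_group N"
    using M N by (simp_all add: lmodule_abelian_group)
  have AM: "\<And>x. x \<in> A \<Longrightarrow> x \<in> carrier M" using A by (auto simp: lsubmodule_def)
  have f0: "f \<zero>\<^bsub>M\<^esub> = \<zero>\<^bsub>N\<^esub>"
    using lin_map_zero[OF MN f] .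
  have fneg: "\<And>x. x \<in> A \<Longrightarrow> \<ominus>\<^bsub>N\<^esub> f x = f (\<ominus>\<^bsub>M\<^esub> x)"
    using lin_map_neg[OF MN f] AM by simp
  have fadd: "\<And>x y. x \<in> A \<Longrightarrow> y \<in> A \<Longrightarrow> f x \<oplus>\<^bsub>N\<^esub> f y = f (x \<oplus>\<^bsub>M\<^esub> y)"
    and fsmult: "\<And>a x. a \<in> carrier L \<Longrightarrow> x \<in> A \<Longrightarrow> a \<odot>\<^bsub>N\<^esub> f x = f (a \<odot>\<^bsub>M\<^esub> x)"
    using f AM by (simp_all add: lin_map_def)
  show ?thesis
    unfolding lsubmodule_def
  proof (intro conjI ballI)
    show "f ` A \<subseteq> carrier N" using f AM by (auto simp: lin_map_def)
    have "\<zero>\<^bsub>M\<^esub> \<in> A" using A by (simp add: lsubmodule_def)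
    then show "\<zero>\<^bsub>N\<^esub> \<in> f ` A" unfolding f0[symmetric] by (rule imageI)
  next
    fix y y' assume "y \<in> f ` A" "y' \<in> f ` A"
    then show "y \<oplus>\<^bsub>N\<^esub> y' \<in> f ` A"
      using A by (auto simp: fadd lsubmodule_def)
  next
    fix y assume "y \<in> f ` A"
    then show "\<ominus>\<^bsub>N\<^esub> y \<in> f ` A"
      using A by (auto simp: fneg lsubmodule_def)
  next
    fix a y assume "a \<in> carrier L" "y \<in> f ` A"
    then show "a \<odot>\<^bsub>N\<^esub> y \<in> f ` A"
      using A by (auto simp: fsmult lsubmodule_def)
  qed
qed

lemma abelian_group_submod:
  assumes M: "lmodule L M" and K: "lsubmodule L M K"
  shows "abelian_group (submod M K)"
proof -
  interpret M: abelian_group M using M by (rule lmodule_abelian_group)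
  have KM: "\<And>x. x \<in> K \<Longrightarrow> x \<in> carrier M" using K by (auto simp: lsubmodule_def)
  show ?thesis
  proof (rule abelian_groupI, unfold submod_def, simp_all)
    show "\<And>x y. x \<in> K \<Longrightarrow> y \<in> K \<Longrightarrow> x \<oplus>\<^bsub>M\<^esub> y \<in> K" "\<zero>\<^bsub>M\<^esub> \<in> K"
      using K by (auto simp: lsubmodule_def)
    show "\<And>x y z. x \<in> K \<Longrightarrow> y \<in> K \<Longrightarrow> z \<in> K \<Longrightarrow>
        x \<oplus>\<^bsub>M\<^esub> y \<oplus>\<^bsub>M\<^esub> z = x \<oplus>\<^bsub>M\<^esub> (y \<oplus>\<^bsub>M\<^esub> z)"
      by (simp add: KM M.a_assoc)
    show "\<And>x y. x \<in> K \<Longrightarrow> y \<in> K \<Longrightarrow> x \<oplus>\<^bsub>M\<^esub> y = y \<oplus>\<^bsub>M\<^esub> x"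
      by (simp add: KM M.a_comm)
    show "\<And>x. x \<in> K \<Longrightarrow> \<zero>\<^bsub>M\<^esub> \<oplus>\<^bsub>M\<^esub> x = x"
      by (simp add: KM)
    show "\<And>x. x \<in> K \<Longrightarrow> \<exists>y\<in>K. y \<oplus>\<^bsub>M\<^esub> x = \<zero>\<^bsub>M\<^esub>"
      using K by (metis KM M.l_neg lsubmodule_def)
  qed
qed

lemma a_inv_submod:
  assumes "lmodule L M" and "lsubmodule L M K" and x: "x \<in> K"
  shows "\<ominus>\<^bsub>submod M K\<^esub> x = \<ominus>\<^bsub>M\<^esub> x"
proof -
  interpret M: abelian_group M using assms(1) by (rule lmodule_abelian_group)
  interpret K: abelian_group "submod M K" using assms(1,2) by (rule abelian_group_submod)
  have "x \<in> carrier M" "\<ominus>\<^bsub>M\<^esub> x \<in> K"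
    using assms(2) x by (auto simp: lsubmodule_def)
  then show ?thesis
    using x by (intro K.minus_equality) (auto simp: submod_def M.l_neg)
qed

lemma lmodule_submod:
  assumes M: "lmodule L M" and K: "lsubmodule L M K"
  shows "lmodule L (submod M K)"
  using M K abelian_group_submod[OF M K]
  by (auto simp: lmodule_def lsubmodule_def submod_def subsetD)

lemma lsubmodule_submod_iff:
  assumes "lmodule L M" and "lsubmodule L M K" and "A \<subseteq> K"
  shows "lsubmodule L (submod M K) A \<longleftrightarrow> lsubmodule L M A"
  using assms a_inv_submod[OF assms(1,2)]
  by (auto simp: lsubmodule_def submod_def subsetD)

lemma lsubmodule_image_submod:
  assumes M: "lmodule L M" and M': "lmodule L M'"
    and K: "lsubmodule L M K" and K': "lsubmodule L M' K'"
    and s: "lin_map L (submod M' K') (submod M K) s"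
    and N': "lsubmodule L M' N'" and N'K': "N' \<subseteq> K'"
  shows "lsubmodule L M (s ` N')"
proof -
  have "s ` N' \<subseteq> K"
    using s N'K' by (auto simp: lin_map_def submod_def)
  moreover have "lsubmodule L (submod M K) (s ` N')"
    using lsubmodule_image[OF lmodule_submod[OF M' K'] lmodule_submod[OF M K] s]
      N' lsubmodule_submod_iff[OF M' K' N'K'] by simp
  ultimately show ?thesis
    using lsubmodule_submod_iff[OF M K] by simp
qed

lemma direct_summand_lift:
  assumes M: "lmodule L M" and M': "lmodule L M'" and h: "lin_map L M M' h"
    and N': "direct_summand L M' N'" and N: "lsubmodule L M N" and bij: "bij_betw h N N'"
  shows "direct_summand L M N"
proof -
  interpret M: abelian_group M using M by (rule lmodule_abelian_group)
  interpret M': abelian_group M' using M' by (rule lmodule_abelian_group)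
  obtain C' where C': "lsubmodule L M' C'" and N'C': "N' \<inter> C' = {\<zero>\<^bsub>M'\<^esub>}"
    and N'C'_span: "\<forall>y\<in>carrier M'. \<exists>a\<in>N'. \<exists>b\<in>C'. y = a \<oplus>\<^bsub>M'\<^esub> b"
    using N' by (auto simp: direct_summand_def)
  define C where "C = {x \<in> carrier M. h x \<in> C'}"
  have C: "lsubmodule L M C"
    unfolding C_def using M M' h C' by (rule lsubmodule_vimage)
  have NM: "N \<subseteq> carrier M" and N0: "\<zero>\<^bsub>M\<^esub> \<in> N" using N by (auto simp: lsubmodule_def)
  have hM: "h \<in> carrier M \<rightarrow> carrier M'"
    and h_add: "\<And>x y. x \<in> carrier M \<Longrightarrow> y \<in> carrier M \<Longrightarrow> h (x \<oplus>\<^bsub>M\<^esub> y) = h x \<oplus>\<^bsub>M'\<^esub> h y"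
    using h by (simp_all add: lin_map_def)
  have h0: "h \<zero>\<^bsub>M\<^esub> = \<zero>\<^bsub>M'\<^esub>"
    using lin_map_zero[OF M.abelian_group_axioms M'.abelian_group_axioms h] .
  have hneg: "\<And>x. x \<in> carrier M \<Longrightarrow> h (\<ominus>\<^bsub>M\<^esub> x) = \<ominus>\<^bsub>M'\<^esub> h x"
    using lin_map_neg[OF M.abelian_group_axioms M'.abelian_group_axioms h] .
  have "N \<inter> C \<subseteq> {\<zero>\<^bsub>M\<^esub>}"
  proof
    fix x assume x: "x \<in> N \<inter> C"
    then have "h x \<in> N' \<inter> C'" using bij by (auto simp: C_def bij_betw_def)
    then have "h x = h \<zero>\<^bsub>M\<^esub>" using N'C' h0 by auto
    then show "x \<in> {\<zero>\<^bsub>M\<^esub>}"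
      using x N0 bij by (auto simp: bij_betw_def dest: inj_onD)
  qed
  moreover have "\<zero>\<^bsub>M\<^esub> \<in> C" using C by (simp add: lsubmodule_def)
  moreover have "\<exists>n\<in>N. \<exists>c\<in>C. x = n \<oplus>\<^bsub>M\<^esub> c" if x: "x \<in> carrier M" for x
  proof -
    obtain a b where a: "a \<in> N'" and b: "b \<in> C'" and hx: "h x = a \<oplus>\<^bsub>M'\<^esub> b"
      using N'C'_span hM x by blast
    obtain n where n: "n \<in> N" and hn: "h n = a"
      using a bij by (auto simp: bij_betw_def)
    have nM: "n \<in> carrier M" using n NM by blast
    have bM': "b \<in> carrier M'" using b C' by (auto simp: lsubmodule_def)
    define c where "c = \<ominus>\<^bsub>M\<^esub> n \<oplus>\<^bsub>M\<^esub> x"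
    have "h c = \<ominus>\<^bsub>M'\<^esub> a \<oplus>\<^bsub>M'\<^esub> (a \<oplus>\<^bsub>M'\<^esub> b)"
      using nM x by (simp add: c_def h_add hneg hn hx)
    also have "\<dots> = b"
      using hM nM bM' unfolding hn[symmetric] by (simp add: M'.a_assoc[symmetric] M'.l_neg Pi_iff)
    finally have "c \<in> C" using nM x by (simp add: C_def c_def b)
    moreover have "x = n \<oplus>\<^bsub>M\<^esub> c"
      using nM x by (simp add: c_def M.a_assoc[symmetric] M.r_neg)
    ultimately show ?thesis using n by blast
  qed
  ultimately show ?thesis
    unfolding direct_summand_def using N C N0 by blast
qed

theorem lemma7p2:
  fixes S :: "'e ring" and phi :: "'e \<Rightarrow> 'a" and L :: "'a ring"
    and XM :: "('a, 'b) module" and XM' :: "('a, 'c) module" and YM :: "('a, 'd) module"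
    and f :: "'b \<Rightarrow> 'd" and f' :: "'c \<Rightarrow> 'd" and h :: "'b \<Rightarrow> 'c"
  assumes "artin_algebra_over S phi L"
    and X: "lmodule L XM" and X': "lmodule L XM'" and Y: "lmodule L YM"
    and "finite_length L XM" and "finite_length L XM'" and "finite_length L YM"
    and f: "epi L XM YM f" and f': "epi L XM' YM f'"
    and h: "lin_map L XM XM' h"
    and "\<forall>x\<in>carrier XM. f x = f' (h x)"
    and f_minimal: "right_minimal L XM YM f"
    and h_split: "split_epi L (submod XM (kernel_of XM YM f)) (submod XM' (kernel_of XM' YM f')) h"
  shows "right_minimal L XM' YM f'"
proof (rule ccontr)
  let ?K = "kernel_of XM YM f" and ?K' = "kernel_of XM' YM f'"
  have K: "lsubmodule L XM ?K" and K': "lsubmodule L XM' ?K'"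
    using kernel_of_lsubmodule X X' Y f f' by (auto simp: epi_def)
  obtain s where s: "lin_map L (submod XM' ?K') (submod XM ?K) s"
    and hs: "\<forall>y\<in>?K'. h (s y) = y"
    using h_split by (auto simp: split_epi_def submod_def)
  assume "\<not> right_minimal L XM' YM f'"
  then obtain N' where N': "direct_summand L XM' N'" and N'_nonzero: "N' \<noteq> {\<zero>\<^bsub>XM'\<^esub>}"
    and f'N': "\<forall>x\<in>N'. f' x = \<zero>\<^bsub>YM\<^esub>"
    by (auto simp: right_minimal_def)
  have N'K': "N' \<subseteq> ?K'"
    using N' f'N' by (auto simp: direct_summand_def lsubmodule_def kernel_of_def)
  have sN'K: "s ` N' \<subseteq> ?K"
    using s N'K' by (auto simp: lin_map_def submod_def)
  have N: "lsubmodule L XM (s ` N')"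
    using lsubmodule_image_submod[OF X X' K K' s _ N'K'] N' by (simp add: direct_summand_def)
  have bij: "bij_betw h (s ` N') N'"
    using hs N'K' by (auto simp: bij_betw_def inj_on_def image_image subsetD)
  have "direct_summand L XM (s ` N')"
    using direct_summand_lift[OF X X' h N' N bij] .
  moreover have "s ` N' \<noteq> {\<zero>\<^bsub>XM\<^esub>}"
    using N'_nonzero bij lin_map_zero[OF X [THEN lmodule_abelian_group] X' [THEN lmodule_abelian_group] h]
    by (auto simp: bij_betw_def)
  moreover have "\<forall>x\<in>s ` N'. f x = \<zero>\<^bsub>YM\<^esub>"
    using sN'K by (auto simp: kernel_of_def)
  ultimately show False
    using f_minimal by (auto simp: right_minimal_def)
qed

end
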